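(* For each $q\in\{1,\dots,s\}$ and $j_1,j_2\ge0$, $$H_{p_{j_1}p_{j_2}}(\zeta)=\sum_{\substack{p\equiv q\ (\mathrm{mod}\ s)\\ 1\le p\le\min\{p_{j_1},p_{j_2}\}}}v^{(p)}_{j_1}\,\overline{v^{(p)}_{j_2}},\qquad v^{(p)}_j=\begin{cases}\frac{p_j}{\sqrt p}R_p\bigl(\frac{p_j-p}{s};\zeta\bigr),& p_j\ge p,\\ 0,&\text{otherwise},\end{cases}$$ where $p_j=q+js$ (a finite sum). More precisely, $H_{p+ks,\,p+\ell s}=\frac{(p+ks)(p+\ell s)}{p}R_p(k;\zeta)\overline{R_p(\ell;\zeta)}$ summed over admissible $p$.
   Context: Fix integers $N\ge1$ and $2\le s_1<\dots<s_N$; put $s=\gcd(s_1,\dots,s_N)$. For $\zeta\in\mathbb C^N$ let $U(x;\zeta)$ be the unique germ analytic at $x=0$ with $U(0;\zeta)=1$ and $U=1+\sum_{n=1}^N\zeta_nx^{s_n}U^{s_n}$; it depends on $x$ only through $x^s$, and $U(x;\zeta)^p=\sum_{m\ge0}R_p(m;\zeta)x^{ms}$. Define $K(x,\bar x';\zeta)=\log\bigl(1-x\bar x'U(x;\zeta)\overline{U(x';\zeta)}\bigr)$ as a power series in the independent variables $x,\bar x'$, and $H_{mn}(\zeta)=-mn\,[x^m][\bar x'^n]K$, $m,n\ge1$. *)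

theory Defs
  imports Complex_Main "HOL-Computational_Algebra.Formal_Power_Series"
begin

definition sgcd :: "nat \<Rightarrow> (nat \<Rightarrow> nat) \<Rightarrow> nat" where
  "sgcd N ss = Gcd (ss ` {1..N})"

definition Ufps :: "nat \<Rightarrow> (nat \<Rightarrow> nat) \<Rightarrow> (nat \<Rightarrow> complex) \<Rightarrow> complex fps" where
  "Ufps N ss z = (THE U. fps_nth U 0 = 1 \<and>
      U = 1 + (\<Sum>n\<in>{1..N}. fps_const (z n) * fps_X ^ (ss n) * U ^ (ss n)))"

definition Rcoef :: "nat \<Rightarrow> (nat \<Rightarrow> nat) \<Rightarrow> (nat \<Rightarrow> complex) \<Rightarrow> nat \<Rightarrow> nat \<Rightarrow> complex" where
  "Rcoef N ss z p m = fps_nth ((Ufps N ss z) ^ p) (m * sgcd N ss)"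

text \<open>Power series in two independent variables x, y (y standing for conj x'):
  outer variable x, coefficients are power series in y.\<close>
definition Wser :: "nat \<Rightarrow> (nat \<Rightarrow> nat) \<Rightarrow> (nat \<Rightarrow> complex) \<Rightarrow> complex fps fps" where
  "Wser N ss z = Abs_fps (\<lambda>m. fps_const (fps_nth (fps_X * Ufps N ss z) m) *
      (fps_X * Abs_fps (\<lambda>n. cnj (fps_nth (Ufps N ss z) n))))"

text \<open>K = log(1 - W) = - sum_{k>=1} W^k / k.  Since W^k has x-order >= k, the
  x^m coefficient only involves k = 1..m.\<close>
definition Kser :: "nat \<Rightarrow> (nat \<Rightarrow> nat) \<Rightarrow> (nat \<Rightarrow> complex) \<Rightarrow> complex fps fps" where
  "Kser N ss z = Abs_fps (\<lambda>m. - (\<Sum>k\<in>{1..m}.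
      fps_const (1 / of_nat k) * fps_nth ((Wser N ss z) ^ k) m))"

definition Hmat :: "nat \<Rightarrow> (nat \<Rightarrow> nat) \<Rightarrow> (nat \<Rightarrow> complex) \<Rightarrow> nat \<Rightarrow> nat \<Rightarrow> complex" where
  "Hmat N ss z m n = - of_nat (m * n) * fps_nth (fps_nth (Kser N ss z) m) n"

end

theory Submission
  imports Defs "HOL-Analysis.Elementary_Metric_Spaces"
begin

(* U is the unique fixed point of U |-> 1 + sum_n zeta_n x^(s_n) U^(s_n), a contraction for the
   x-adic metric on formal power series (Banach's fixed point theorem gives existence and
   uniqueness at once).  By uniqueness U(x) = V(x^s), where V solves the same equation with
   x^(s_n) replaced by x^(s_n / s); hence every U^p is supported on multiples of s.
   Writing W = x U(x) y conj(U)(y) as a product of a series in x and a series in y,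
   [x^m][y^n] log(1 - W) = - sum_k [x^(m-k)] U^k conj([y^(n-k)] U^k) / k, and only k congruent
   to m modulo s contribute. *)

unbundle fps_syntax

lemma fps_X_power_subdegree_dvd: "fps_X ^ subdegree f dvd (f :: 'a::comm_ring_1 fps)"
  by (metis dvd_triv_left fps_unit_factor_decompose')

lemma dist_fps_le_if_fps_X_power_dvd:
  fixes f g :: "'a::comm_ring_1 fps"
  assumes "fps_X ^ k dvd f - g"
  shows "dist f g \<le> inverse (2 ^ k)"
proof (cases "f = g")
  case False
  then have "k \<le> subdegree (f - g)"
    using dvd_imp_subdegree_le[OF assms] by (simp add: fps_X_power_subdegree)
  then show ?thesis
    using False by (simp add: dist_fps_def le_imp_inverse_le)
qed simp

definition funeq_map ::
    "'b set \<Rightarrow> ('b \<Rightarrow> 'a::comm_ring_1) \<Rightarrow> ('b \<Rightarrow> nat) \<Rightarrow> ('b \<Rightarrow> nat) \<Rightarrow> 'a fps \<Rightarrow> 'a fps" where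
  "funeq_map A c a b U = 1 + (\<Sum>n\<in>A. fps_const (c n) * fps_X ^ a n * U ^ b n)"

lemma funeq_map_diff_dvd:
  assumes "\<forall>n\<in>A. 0 < a n" and "fps_X ^ k dvd U - V"
  shows "fps_X ^ Suc k dvd funeq_map A c a b U - funeq_map A c a b V"
proof -
  have "fps_X ^ Suc k dvd fps_X ^ a n * (U ^ b n - V ^ b n)" if "n \<in> A" for n
  proof -
    have "U - V dvd U ^ b n - V ^ b n"
      by (metis dvd_triv_left power_diff_sumr2)
    then have "fps_X ^ k dvd U ^ b n - V ^ b n"
      using assms(2) dvd_trans by blast
    moreover have "fps_X ^ Suc k dvd fps_X ^ a n * fps_X ^ k"
      unfolding power_add[symmetric] using assms(1) that by (intro le_imp_power_dvd) auto
    ultimately show ?thesis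
      by (meson dvd_trans mult_dvd_mono dvd_refl)
  qed
  then have "fps_X ^ Suc k dvd (\<Sum>n\<in>A. fps_const (c n) * (fps_X ^ a n * (U ^ b n - V ^ b n)))"
    by (simp add: dvd_sum)
  then show ?thesis
    by (simp add: funeq_map_def algebra_simps flip: sum_subtractf)
qed

lemma funeq_map_contraction:
  assumes "\<forall>n\<in>A. 0 < a n"
  shows "dist (funeq_map A c a b U) (funeq_map A c a b V) \<le> 1 / 2 * dist U V"
proof (cases "U = V")
  case False
  have "fps_X ^ Suc (subdegree (U - V)) dvd funeq_map A c a b U - funeq_map A c a b V"
    using funeq_map_diff_dvd[OF assms fps_X_power_subdegree_dvd] .
  then show ?thesis
    using dist_fps_le_if_fps_X_power_dvd False by (fastforce simp: dist_fps_def)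
qed simp

lemma funeq_map_ex1_fixpoint:
  assumes "\<forall>n\<in>A. 0 < a n"
  shows "\<exists>!U. funeq_map A c a b U = U"
  by (rule banach_fix_type[where c = "1 / 2"]) (use funeq_map_contraction[OF assms] in auto)

lemma funeq_map_nth_0:
  assumes "\<forall>n\<in>A. 0 < a n"
  shows "funeq_map A c a b U $ 0 = 1"
  using assms by (auto simp: funeq_map_def fps_sum_nth mult.assoc intro!: sum.neutral)

lemma fps_compose_fps_X_power_nth:
  assumes "0 < s"
  shows "(V oo fps_X ^ s) $ n = (if s dvd n then V $ (n div s) else 0)"
proof -
  have "(V oo fps_X ^ s) $ n = (\<Sum>i\<in>{0..n}. V $ i * (if n = s * i then 1 else 0))"
    by (simp add: fps_compose_nth flip: power_mult)
  also have "\<dots> = (\<Sum>i\<in>{0..n}. if i = n div s \<and> s dvd n then V $ i else 0)"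
    using assms by (intro sum.cong) auto
  also have "\<dots> = (if s dvd n then V $ (n div s) else 0)"
    by (simp add: sum.delta' conj_commute)
  finally show ?thesis .
qed

lemma funeq_map_compose_fps_X_power:
  fixes U :: "'a::idom fps"
  assumes "0 < s"
  shows "funeq_map A c a b U oo fps_X ^ s = funeq_map A c (\<lambda>n. s * a n) b (U oo fps_X ^ s)"
proof -
  have X0: "(fps_X ^ s :: 'a fps) $ 0 = 0"
    using assms by simp
  show ?thesis
    unfolding funeq_map_def fps_compose_add_distrib fps_compose_sum_distrib
      fps_compose_mult_distrib[OF X0] fps_compose_power[OF X0, symmetric]
    by (simp add: fps_X_fps_compose_startby0[OF X0] power_mult)
qed

lemma Ufps_unique:
  assumes "\<forall>n\<in>{1..N}. 0 < ss n" and "funeq_map {1..N} z ss ss U = U"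
  shows "Ufps N ss z = U"
  unfolding Ufps_def funeq_map_def[symmetric]
proof (rule the_equality)
  show "U $ 0 = 1 \<and> U = funeq_map {1..N} z ss ss U"
    using assms funeq_map_nth_0 by metis
  show "W = U" if "W $ 0 = 1 \<and> W = funeq_map {1..N} z ss ss W" for W
    using that assms funeq_map_ex1_fixpoint by metis
qed

lemma Ufps_decimation:
  assumes "0 < s" and "\<forall>n\<in>{1..N}. 0 < ss n \<and> s dvd ss n"
  shows "\<exists>V. Ufps N ss z = V oo fps_X ^ s"
proof -
  have "\<forall>n\<in>{1..N}. 0 < ss n div s"
    using assms by (auto simp: div_greater_zero_iff dvd_imp_le)
  then obtain V where V: "funeq_map {1..N} z (\<lambda>n. ss n div s) ss V = V"
    using funeq_map_ex1_fixpoint by metis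
  have "funeq_map {1..N} z ss ss (V oo fps_X ^ s)
      = funeq_map {1..N} z (\<lambda>n. s * (ss n div s)) ss (V oo fps_X ^ s)"
    using assms(2) unfolding funeq_map_def by (intro arg_cong2[where f = "(+)"] sum.cong) auto
  also have "\<dots> = V oo fps_X ^ s"
    by (metis V funeq_map_compose_fps_X_power assms(1))
  finally show ?thesis
    using Ufps_unique assms(2) by blast
qed

lemma Ufps_power_nth_eq_0:
  assumes "0 < s" and "\<forall>n\<in>{1..N}. 0 < ss n \<and> s dvd ss n" and "\<not> s dvd i"
  shows "(Ufps N ss z ^ p) $ i = 0"
proof -
  obtain V where "Ufps N ss z = V oo fps_X ^ s"
    using Ufps_decimation[OF assms(1,2)] by blast
  then have "Ufps N ss z ^ p = V ^ p oo fps_X ^ s"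
    using assms(1) by (simp add: fps_compose_power)
  then show ?thesis
    using assms(1,3) by (simp add: fps_compose_fps_X_power_nth)
qed

definition fps_tensor :: "'a::comm_ring_1 fps \<Rightarrow> 'a fps \<Rightarrow> 'a fps fps" where
  "fps_tensor f g = Abs_fps (\<lambda>m. fps_const (f $ m) * g)"

lemma fps_tensor_nth_nth [simp]: "fps_tensor f g $ m $ n = f $ m * g $ n"
  by (simp add: fps_tensor_def)

lemma fps_tensor_mult: "fps_tensor f g * fps_tensor f' g' = fps_tensor (f * f') (g * g')"
proof (rule fps_ext)
  fix m
  have "(fps_tensor f g * fps_tensor f' g') $ m = (\<Sum>i=0..m. fps_const (f $ i * f' $ (m - i)) * (g * g'))"
    by (simp only: fps_mult_nth fps_tensor_def fps_nth_Abs_fps) (simp add: mult_ac)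
  also have "\<dots> = fps_tensor (f * f') (g * g') $ m"
    by (intro fps_ext) (simp add: fps_sum_nth fps_mult_nth[of f f' m] sum_distrib_right)
  finally show "(fps_tensor f g * fps_tensor f' g') $ m = fps_tensor (f * f') (g * g') $ m" .
qed

lemma fps_tensor_one: "fps_tensor 1 1 = 1"
  by (simp add: fps_tensor_def fps_eq_iff)

lemma fps_tensor_power: "fps_tensor f g ^ k = fps_tensor (f ^ k) (g ^ k)"
  by (induction k) (simp_all add: fps_tensor_mult fps_tensor_one)

definition fps_cnj :: "complex fps \<Rightarrow> complex fps" where
  "fps_cnj f = Abs_fps (\<lambda>n. cnj (f $ n))"

lemma fps_cnj_nth [simp]: "fps_cnj f $ n = cnj (f $ n)"
  by (simp add: fps_cnj_def)

lemma fps_cnj_mult: "fps_cnj (f * g) = fps_cnj f * fps_cnj g"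
  by (intro fps_ext) (simp add: fps_mult_nth)

lemma fps_cnj_one: "fps_cnj 1 = 1"
  by (intro fps_ext) simp

lemma fps_cnj_power: "fps_cnj (f ^ k) = fps_cnj f ^ k"
  by (induction k) (simp_all add: fps_cnj_mult fps_cnj_one)

lemma Wser_power:
  "Wser N ss z ^ k = fps_tensor (fps_X ^ k * Ufps N ss z ^ k) (fps_X ^ k * fps_cnj (Ufps N ss z ^ k))"
proof -
  have "Wser N ss z = fps_tensor (fps_X * Ufps N ss z) (fps_X * fps_cnj (Ufps N ss z))"
    by (simp add: Wser_def fps_tensor_def fps_cnj_def)
  then show ?thesis
    by (simp add: fps_tensor_power fps_cnj_power power_mult_distrib)
qed

lemma Kser_nth_nth:
  "Kser N ss z $ m $ n = - (\<Sum>k\<in>{1..min m n}.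
      (Ufps N ss z ^ k) $ (m - k) * cnj ((Ufps N ss z ^ k) $ (n - k)) / of_nat k)"
proof -
  have "Kser N ss z $ m $ n = - (\<Sum>k\<in>{1..m}. Wser N ss z ^ k $ m $ n / of_nat k)"
    by (simp add: Kser_def fps_sum_nth)
  also have "\<dots> = - (\<Sum>k\<in>{1..min m n}.
      (Ufps N ss z ^ k) $ (m - k) * cnj ((Ufps N ss z ^ k) $ (n - k)) / of_nat k)"
    by (intro arg_cong[where f = uminus] sum.mono_neutral_cong_right)
      (auto simp: Wser_power fps_X_power_mult_nth)
  finally show ?thesis .
qed

lemma Hmat_eq_sum:
  "Hmat N ss z m n = (\<Sum>k\<in>{1..min m n}.
      of_nat (m * n) / of_nat k * (Ufps N ss z ^ k) $ (m - k) * cnj ((Ufps N ss z ^ k) $ (n - k)))"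
  unfolding Hmat_def Kser_nth_nth by (simp add: sum_distrib_left sum_negf times_divide_eq_right ac_simps)

lemma sgcd_pos:
  assumes "1 \<le> N" and "\<forall>n\<in>{1..N}. 0 < ss n"
  shows "0 < sgcd N ss"
proof -
  have "ss 1 \<in> ss ` {1..N}" "ss 1 \<noteq> 0"
    using assms by auto
  then show ?thesis
    unfolding sgcd_def by (metis Gcd_0_iff bot_nat_0.not_eq_extremum singletonD subsetD)
qed

lemma Hmat_eq_sum_Rcoef:
  assumes "1 \<le> N" and "\<forall>n\<in>{1..N}. 0 < ss n" and "m mod sgcd N ss = n mod sgcd N ss"
  shows "Hmat N ss z m n = (\<Sum>p\<in>{p. 1 \<le> p \<and> p \<le> min m n \<and> p mod sgcd N ss = m mod sgcd N ss}.
      of_nat (m * n) / of_nat p * Rcoef N ss z p ((m - p) div sgcd N ss)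
        * cnj (Rcoef N ss z p ((n - p) div sgcd N ss)))"
proof -
  define s where "s = sgcd N ss"
  define U where "U = Ufps N ss z"
  have s: "0 < s" "\<forall>n\<in>{1..N}. 0 < ss n \<and> s dvd ss n"
    using sgcd_pos[OF assms(1,2)] assms(2) by (auto simp: s_def sgcd_def Gcd_dvd)
  have Rcoef_eq: "Rcoef N ss z p ((k - p) div s) = (U ^ p) $ (k - p)"
    if "p \<le> k" "p mod s = k mod s" for p k
  proof -
    have "s dvd k - p"
      using that mod_eq_dvd_iff_nat[of p k s] by simp
    then show ?thesis
      by (simp add: Rcoef_def U_def s_def[symmetric])
  qed
  have vanish: "(U ^ p) $ (m - p) = 0" if "p \<le> m" "p mod s \<noteq> m mod s" for p
    using that Ufps_power_nth_eq_0[OF s] mod_eq_dvd_iff_nat[of p m s] by (simp add: U_def)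
  have "Hmat N ss z m n = (\<Sum>p\<in>{1..min m n}.
      of_nat (m * n) / of_nat p * (U ^ p) $ (m - p) * cnj ((U ^ p) $ (n - p)))"
    by (simp add: Hmat_eq_sum U_def)
  also have "\<dots> = (\<Sum>p\<in>{p. 1 \<le> p \<and> p \<le> min m n \<and> p mod s = m mod s}.
      of_nat (m * n) / of_nat p * Rcoef N ss z p ((m - p) div s) * cnj (Rcoef N ss z p ((n - p) div s)))"
    using assms(3)[folded s_def] by (intro sum.mono_neutral_cong_right) (auto simp: vanish Rcoef_eq)
  finally show ?thesis
    by (simp add: s_def)
qed

lemma of_real_sqrt_mult_self_of_nat:
  "complex_of_real (sqrt (real p)) * complex_of_real (sqrt (real p)) = of_nat p"
  by (simp flip: of_real_mult)

lemma increasing_ge_first: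
  fixes ss :: "nat \<Rightarrow> nat"
  assumes "\<And>i. 1 \<le> i \<Longrightarrow> i < N \<Longrightarrow> ss i < ss (Suc i)" and "n \<in> {1..N}"
  shows "ss 1 \<le> ss n"
proof -
  have "1 \<le> n" "n \<le> N"
    using assms(2) by auto
  then show ?thesis
  proof (induction n rule: dec_induct)
    case (step k)
    then show ?case
      using assms(1)[of k] by simp
  qed simp
qed

theorem proposition2p7:
  fixes N :: nat and ss :: "nat \<Rightarrow> nat" and z :: "nat \<Rightarrow> complex"
    and q j1 j2 :: nat
  assumes "N \<ge> 1"
    and "2 \<le> ss 1"
    and "\<And>i. 1 \<le> i \<Longrightarrow> i < N \<Longrightarrow> ss i < ss (Suc i)"
    and "q \<in> {1..sgcd N ss}"
  shows "(let s = sgcd N ss;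
              pj = (\<lambda>j. q + j * s);
              v = (\<lambda>j p. if pj j \<ge> p
                         then of_nat (pj j) / complex_of_real (sqrt (real p))
                              * Rcoef N ss z p ((pj j - p) div s)
                         else 0)
          in Hmat N ss z (pj j1) (pj j2)
             = (\<Sum>p\<in>{p. 1 \<le> p \<and> p \<le> min (pj j1) (pj j2) \<and> p mod s = q mod s}.
                   v j1 p * cnj (v j2 p)))"
proof -
  have "ss 1 \<le> ss n" if "n \<in> {1..N}" for n
    using assms(3) that by (rule increasing_ge_first)
  then have "\<forall>n\<in>{1..N}. 0 < ss n"
    using assms(2) by force
  then show ?thesis
    unfolding Let_def
    by (subst Hmat_eq_sum_Rcoef[OF assms(1)]) (auto simp: of_real_sqrt_mult_self_of_nat mult_ac intro!: sum.cong)
qed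

end
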